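(* For any $0<\lambda<n$ and $1\le p<\infty$, $$V^{(\ast)}_{0,\infty}L^{p,\lambda}\subsetneqq V_0L^{p,\lambda}\cap V_\infty L^{p,\lambda}\subsetneqq V_0L^{p,\lambda}\subsetneqq L^{p,\lambda}(\mathbb{R}^n).$$
   Context: $B(x,r)$ is the open ball in $\mathbb{R}^n$ with center $x$ and radius $r$. For $f\in L^1_{\mathrm{loc}}(\mathbb{R}^n)$ let $\mathfrak{M}_{p,\lambda}(f;x,r):=r^{-\lambda}\int_{B(x,r)}|f(y)|^p\,dy$. The homogeneous Morrey space $L^{p,\lambda}(\mathbb{R}^n)$ consists of $f\in L^p_{\mathrm{loc}}(\mathbb{R}^n)$ with $\|f\|_{p,\lambda}:=\sup_{x\in\mathbb{R}^n,\,r>0}\mathfrak{M}_{p,\lambda}(f;x,r)^{1/p}<\infty$. Subsets of $L^{p,\lambda}$: $V_0L^{p,\lambda}=\{f:\lim_{r\to0}\sup_{x}\mathfrak{M}_{p,\lambda}(f;x,r)=0\}$; $V_\infty L^{p,\lambda}=\{f:\lim_{r\to\infty}\sup_{x}\mathfrak{M}_{p,\lambda}(f;x,r)=0\}$; $V^{(\ast)}L^{p,\lambda}=\{f:\lim_{N\to\infty}\sup_{x}\int_{B(x,1)}|f(y)|^p\chi_{\mathbb{R}^n\setminus B(0,N)}(y)\,dy=0\}$; $V^{(\ast)}_{0,\infty}L^{p,\lambda}:=V_0L^{p,\lambda}\cap V_\infty L^{p,\lambda}\cap V^{(\ast)}L^{p,\lambda}$. *)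

theory Defs
  imports "HOL-Analysis.Analysis"
begin

definition morrey_M :: "real \<Rightarrow> real \<Rightarrow> ('a::euclidean_space \<Rightarrow> real) \<Rightarrow> 'a \<Rightarrow> real \<Rightarrow> ennreal" where
  "morrey_M p lam f x r =
     ennreal (r powr (-lam)) * (\<integral>\<^sup>+ y. ennreal (\<bar>f y\<bar> powr p) * indicator (ball x r) y \<partial>lebesgue)"

definition Lp_loc :: "real \<Rightarrow> ('a::euclidean_space \<Rightarrow> real) set" where
  "Lp_loc p = {f. f \<in> borel_measurable lebesgue \<and>
     (\<forall>x r. (\<integral>\<^sup>+ y. ennreal (\<bar>f y\<bar> powr p) * indicator (ball x r) y \<partial>lebesgue) < \<infinity>)}"

definition morrey :: "real \<Rightarrow> real \<Rightarrow> ('a::euclidean_space \<Rightarrow> real) set" where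
  "morrey p lam = {f. f \<in> Lp_loc p \<and> (SUP x. SUP r\<in>{0<..}. morrey_M p lam f x r) < \<infinity>}"

definition V0_morrey :: "real \<Rightarrow> real \<Rightarrow> ('a::euclidean_space \<Rightarrow> real) set" where
  "V0_morrey p lam = {f \<in> morrey p lam.
     ((\<lambda>r. SUP x. morrey_M p lam f x r) \<longlongrightarrow> 0) (at_right 0)}"

definition Vinf_morrey :: "real \<Rightarrow> real \<Rightarrow> ('a::euclidean_space \<Rightarrow> real) set" where
  "Vinf_morrey p lam = {f \<in> morrey p lam.
     ((\<lambda>r. SUP x. morrey_M p lam f x r) \<longlongrightarrow> 0) at_top}"

definition Vstar_morrey :: "real \<Rightarrow> real \<Rightarrow> ('a::euclidean_space \<Rightarrow> real) set" where
  "Vstar_morrey p lam = {f \<in> morrey p lam.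
     ((\<lambda>N::real. SUP x. (\<integral>\<^sup>+ y. ennreal (\<bar>f y\<bar> powr p) * indicator (ball x 1) y
                              * indicator (UNIV - ball 0 N) y \<partial>lebesgue)) \<longlongrightarrow> 0) at_top}"

definition V0inf_star_morrey :: "real \<Rightarrow> real \<Rightarrow> ('a::euclidean_space \<Rightarrow> real) set" where
  "V0inf_star_morrey p lam = V0_morrey p lam \<inter> Vinf_morrey p lam \<inter> Vstar_morrey p lam"

end

theory Submission
  imports Defs "HOL-Real_Asymp.Real_Asymp"
begin

text \<open>
  Three examples separate the four classes. The power weight |y|^((\<lambda> - n)/p) lies in the
  Morrey space: cutting a ball into dyadic shells shows that the integral of its p-th power over
  a ball of radius r is O(r^\<lambda>). Being scale invariant, it has Morrey functional bounded below
  at every scale on the ball B(2re, r), which lies in the annulus r < |y| < 3r; so it is not in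
  V_0. Cutting it off inside the unit ball gives a bounded function, which is in V_0 because the
  functional of a bounded function is O(r^(n - \<lambda>)); the annulus argument at large r keeps it
  out of V_\<infinity>. Finally, the indicator of the unit balls centred at 2^k e is bounded, and a ball of
  radius r meets only O(log r) of them, so its functional is O(r^(-\<lambda>) log r) and it lies in
  V_0 \<inter> V_\<infinity>; but unit balls arbitrarily far out carry full mass, so it is not in V^(*).
\<close>

declare open_ball[THEN borel_open, measurable]

abbreviation ball_integral :: "real \<Rightarrow> ('a::euclidean_space \<Rightarrow> real) \<Rightarrow> 'a \<Rightarrow> real \<Rightarrow> ennreal" where
  "ball_integral p f x r \<equiv> \<integral>\<^sup>+ y. ennreal (\<bar>f y\<bar> powr p) * indicator (ball x r) y \<partial>lebesgue"

definition unit_ball_vol :: "'a::euclidean_space itself \<Rightarrow> real" where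
  "unit_ball_vol _ = measure lborel (ball (0::'a) 1)"

lemma unit_ball_vol_pos: "0 < unit_ball_vol TYPE('a::euclidean_space)"
  unfolding unit_ball_vol_def by (rule content_ball_pos) simp

lemma nn_integral_const_ball:
  fixes c :: "'a::euclidean_space"
  assumes "0 \<le> r" "0 \<le> k"
  shows "(\<integral>\<^sup>+ y. ennreal k * indicator (ball c r) y \<partial>lebesgue)
       = ennreal (k * r ^ DIM('a) * unit_ball_vol TYPE('a))"
proof -
  have "emeasure lebesgue (ball (0::'a) 1) = ennreal (unit_ball_vol TYPE('a))"
    using emeasure_lborel_ball_finite[of "0::'a" 1] unfolding unit_ball_vol_def
    by (subst emeasure_eq_ennreal_measure) auto
  then show ?thesis
    using assms emeasure_lebesgue_ball_conv_unit_ball[OF assms(1), of c]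
    by (simp add: nn_integral_cmult_indicator ennreal_mult' mult.assoc)
qed

section \<open>The Morrey functional\<close>

lemma morrey_M_le:
  assumes "ball_integral p f x r \<le> ennreal B"
  shows "morrey_M p lam f x r \<le> ennreal (r powr (-lam) * B)"
proof -
  have "morrey_M p lam f x r \<le> ennreal (r powr (-lam)) * ennreal B"
    unfolding morrey_M_def by (intro mult_left_mono assms) auto
  then show ?thesis
    by (simp add: ennreal_mult'[symmetric])
qed

lemma morrey_M_ge:
  assumes "ennreal B \<le> ball_integral p f x r"
  shows "ennreal (r powr (-lam) * B) \<le> morrey_M p lam f x r"
proof -
  have "ennreal (r powr (-lam)) * ennreal B \<le> morrey_M p lam f x r"
    unfolding morrey_M_def by (intro mult_left_mono assms) auto
  then show ?thesis
    by (simp add: ennreal_mult'[symmetric])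
qed

lemma morreyI:
  fixes f :: "'a::euclidean_space \<Rightarrow> real"
  assumes "f \<in> borel_measurable lebesgue"
    and "\<And>x r. 0 < r \<Longrightarrow> ball_integral p f x r < \<infinity>"
    and "\<And>x r. 0 < r \<Longrightarrow> morrey_M p lam f x r \<le> ennreal K"
  shows "f \<in> morrey p lam"
proof -
  have "ball_integral p f x r < \<infinity>" for x r
  proof (cases "0 < r")
    case False
    then have "indicator (ball x r) y = (0::ennreal)" for y
      by (metis indicator_simps(2) mem_ball order_le_less_trans zero_le_dist)
    then show ?thesis
      by simp
  qed (rule assms(2))
  then have "f \<in> Lp_loc p"
    using assms(1) unfolding Lp_loc_def by blast
  moreover have "(SUP x. SUP r\<in>{0<..}. morrey_M p lam f x r) \<le> ennreal K"
    by (intro SUP_least) (auto intro: assms(3))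
  then have "(SUP x. SUP r\<in>{0<..}. morrey_M p lam f x r) < \<infinity>"
    by (simp add: le_less_trans)
  ultimately show ?thesis
    unfolding morrey_def by blast
qed

lemma morreyI_ball_integral_le:
  fixes f :: "'a::euclidean_space \<Rightarrow> real"
  assumes "f \<in> borel_measurable lebesgue"
    and "\<And>x r. 0 < r \<Longrightarrow> ball_integral p f x r \<le> ennreal (K * r powr lam)"
  shows "f \<in> morrey p lam"
proof (rule morreyI[OF assms(1)])
  fix x :: 'a and r :: real
  assume r: "0 < r"
  show "ball_integral p f x r < \<infinity>"
    using assms(2)[OF r, of x] by (simp add: le_less_trans)
  have "morrey_M p lam f x r \<le> ennreal (r powr (-lam) * (K * r powr lam))"
    by (rule morrey_M_le[OF assms(2)[OF r]])
  also have "r powr (-lam) * (K * r powr lam) = K"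
    using r by (simp add: powr_minus field_simps)
  finally show "morrey_M p lam f x r \<le> ennreal K" .
qed

lemma SUP_morrey_M_tendsto_zeroI:
  fixes f :: "'a::euclidean_space \<Rightarrow> real"
  assumes "\<forall>\<^sub>F r in F. 0 < r" "(g \<longlongrightarrow> 0) F"
    and "\<And>x r. 0 < r \<Longrightarrow> morrey_M p lam f x r \<le> ennreal (g r)"
  shows "((\<lambda>r. SUP x. morrey_M p lam f x r) \<longlongrightarrow> 0) F"
proof (rule tendsto_sandwich[of "\<lambda>_. 0" _ _ "\<lambda>r. ennreal (g r)"])
  show "\<forall>\<^sub>F r in F. (SUP x. morrey_M p lam f x r) \<le> ennreal (g r)"
    using assms(1) by eventually_elim (auto intro!: SUP_least assms(3))
  show "((\<lambda>r. ennreal (g r)) \<longlongrightarrow> 0) F"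
    using tendsto_ennrealI[OF assms(2)] by simp
qed auto

lemma not_tendsto_zero_if_eventually_ge:
  fixes g :: "'b \<Rightarrow> ennreal"
  assumes "F \<noteq> bot" "0 < c" "\<forall>\<^sub>F t in F. c \<le> g t"
  shows "\<not> (g \<longlongrightarrow> 0) F"
proof
  assume "(g \<longlongrightarrow> 0) F"
  from tendsto_lowerbound[OF this assms(3,1)] show False
    using assms(2) by simp
qed

lemma morrey_M_le_bounded:
  fixes f :: "'a::euclidean_space \<Rightarrow> real"
  assumes "\<And>y. \<bar>f y\<bar> powr p \<le> B" "0 < r"
  shows "morrey_M p lam f x r \<le> ennreal (B * unit_ball_vol TYPE('a) * r powr (real DIM('a) - lam))"
proof -
  have B: "0 \<le> B"
    using assms(1)[of 0] by (meson order_trans powr_ge_zero)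
  have "ball_integral p f x r \<le> (\<integral>\<^sup>+ y. ennreal B * indicator (ball x r) y \<partial>lebesgue)"
    using assms(1) by (intro nn_integral_mono mult_right_mono ennreal_leI) auto
  also have "\<dots> = ennreal (B * r ^ DIM('a) * unit_ball_vol TYPE('a))"
    using B assms(2) by (simp add: nn_integral_const_ball)
  finally have "morrey_M p lam f x r \<le> ennreal (r powr (-lam) * (B * r ^ DIM('a) * unit_ball_vol TYPE('a)))"
    by (rule morrey_M_le)
  also have "r powr (-lam) * (B * r ^ DIM('a) * unit_ball_vol TYPE('a))
           = B * unit_ball_vol TYPE('a) * r powr (real DIM('a) - lam)"
    using assms(2) by (simp add: powr_realpow[symmetric] powr_diff powr_minus divide_simps)
  finally show ?thesis .
qed

lemma V0_morreyI_bounded: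
  fixes f :: "'a::euclidean_space \<Rightarrow> real"
  assumes "f \<in> morrey p lam" "\<And>y. \<bar>f y\<bar> powr p \<le> B" "lam < real DIM('a)"
  shows "f \<in> V0_morrey p lam"
proof -
  have "((\<lambda>r. B * unit_ball_vol TYPE('a) * r powr (real DIM('a) - lam)) \<longlongrightarrow> 0) (at_right 0)"
    using assms(3) by real_asymp
  then have "((\<lambda>r. SUP x. morrey_M p lam f x r) \<longlongrightarrow> 0) (at_right 0)"
    using morrey_M_le_bounded[OF assms(2)]
    by (intro SUP_morrey_M_tendsto_zeroI eventually_at_right_less) auto
  with assms(1) show ?thesis
    by (simp add: V0_morrey_def)
qed

lemma SUP_morrey_M_ge_annulus:
  fixes f :: "'a::euclidean_space \<Rightarrow> real"
  assumes r: "0 < r" and lam: "lam \<le> real DIM('a)"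
    and f: "\<And>y. r < norm y \<Longrightarrow> norm y < 3 * r \<Longrightarrow> norm y powr (lam - real DIM('a)) \<le> \<bar>f y\<bar> powr p"
  shows "ennreal (3 powr (lam - real DIM('a)) * unit_ball_vol TYPE('a)) \<le> (SUP x. morrey_M p lam f x r)"
proof -
  let ?a = "lam - real DIM('a)"
  obtain e :: 'a where "e \<in> Basis"
    using nonempty_Basis by blast
  define x where "x = (2 * r) *\<^sub>R e"
  have norm_x: "norm x = 2 * r"
    using \<open>e \<in> Basis\<close> r by (simp add: x_def)
  have "ennreal ((3 * r) powr ?a) * indicator (ball x r) y \<le> ennreal (\<bar>f y\<bar> powr p) * indicator (ball x r) y"
    for y
  proof (cases "y \<in> ball x r")
    case True
    then have "norm (x - y) < r"
      by (simp add: dist_norm)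
    then have "r < norm y" "norm y < 3 * r"
      using norm_x norm_triangle_ineq2[of x y] norm_triangle_ineq3[of y x] norm_minus_commute[of y x]
      by linarith+
    moreover have "(3 * r) powr ?a \<le> norm y powr ?a"
      using \<open>norm y < 3 * r\<close> \<open>r < norm y\<close> r lam by (intro powr_mono2') auto
    ultimately have "(3 * r) powr ?a \<le> \<bar>f y\<bar> powr p"
      using f by (meson order_trans)
    then show ?thesis
      using True by (simp add: ennreal_leI)
  qed simp
  then have "(\<integral>\<^sup>+ y. ennreal ((3 * r) powr ?a) * indicator (ball x r) y \<partial>lebesgue) \<le> ball_integral p f x r"
    by (rule nn_integral_mono)
  then have "ennreal ((3 * r) powr ?a * r ^ DIM('a) * unit_ball_vol TYPE('a)) \<le> ball_integral p f x r"
    using r by (simp add: nn_integral_const_ball)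
  then have "ennreal (r powr (-lam) * ((3 * r) powr ?a * r ^ DIM('a) * unit_ball_vol TYPE('a)))
            \<le> morrey_M p lam f x r"
    by (rule morrey_M_ge)
  moreover have "r powr (-lam) * r powr ?a * r powr DIM('a) = 1"
    using r by (simp add: powr_add[symmetric])
  then have "r powr (-lam) * ((3 * r) powr ?a * r ^ DIM('a) * unit_ball_vol TYPE('a))
           = 3 powr ?a * unit_ball_vol TYPE('a)"
    using r by (simp add: powr_mult powr_realpow)
  ultimately have "ennreal (3 powr ?a * unit_ball_vol TYPE('a)) \<le> morrey_M p lam f x r"
    by simp
  also have "\<dots> \<le> (SUP x. morrey_M p lam f x r)"
    by (rule SUP_upper) simp
  finally show ?thesis .
qed

section \<open>Integrability of negative powers of the norm\<close>

lemma exists_dyadic_shell: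
  fixes r t :: real
  assumes "0 < t" "t < r"
  obtains k :: nat where "r / 2 ^ (k + 1) \<le> t" "t < r / 2 ^ k"
proof -
  obtain m :: nat where "r / t < 2 ^ m"
    using real_arch_pow[of 2 "r / t"] by auto
  then have ex: "\<exists>k. r / 2 ^ (k + 1) \<le> t"
    using assms by (intro exI[of _ m]) (auto simp: field_simps)
  define k where "k = (LEAST k. r / 2 ^ (k + 1) \<le> t)"
  have "r / 2 ^ (k + 1) \<le> t"
    unfolding k_def by (rule LeastI_ex[OF ex])
  moreover have "t < r / 2 ^ k"
  proof (cases k)
    case (Suc j)
    then have "\<not> r / 2 ^ (j + 1) \<le> t"
      using not_less_Least[of j "\<lambda>k. r / 2 ^ (k + 1) \<le> t"] k_def by auto
    then show ?thesis
      using Suc by simp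
  qed (use assms in simp)
  ultimately show ?thesis
    using that by blast
qed

lemma norm_powr_le_dyadic_sum:
  fixes y :: "'a::real_normed_vector"
  assumes "0 < a" "0 < r"
  shows "ennreal (norm y powr (-a)) * indicator (ball 0 r) y
       \<le> (\<Sum>k. ennreal ((r / 2 ^ (k + 1)) powr (-a)) * indicator (ball 0 (r / 2 ^ k)) y)"
proof (cases "y \<in> ball 0 r \<and> y \<noteq> 0")
  case True
  then obtain k where k: "r / 2 ^ (k + 1) \<le> norm y" "norm y < r / 2 ^ k"
    using exists_dyadic_shell[of "norm y" r] by auto
  have "ennreal (norm y powr (-a)) * indicator (ball 0 r) y = ennreal (norm y powr (-a))"
    using True by simp
  also have "\<dots> \<le> ennreal ((r / 2 ^ (k + 1)) powr (-a)) * indicator (ball 0 (r / 2 ^ k)) y"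
    using k assms by (simp add: ennreal_leI powr_mono2')
  also have "\<dots> \<le> (\<Sum>k. ennreal ((r / 2 ^ (k + 1)) powr (-a)) * indicator (ball 0 (r / 2 ^ k)) y)"
    (is "_ \<le> suminf ?term")
  proof -
    have "sum ?term {k} \<le> suminf ?term"
      by (rule sum_le_suminf[OF summableI]) auto
    then show ?thesis
      by (simp only: sum.insert finite.emptyI empty_iff not_False_eq_True sum.empty add.right_neutral)
  qed
  finally show ?thesis .
qed (auto simp: indicator_def)

lemma dyadic_shell_term_eq:
  fixes r a n :: real and k :: nat
  assumes "0 < r"
  shows "(r / 2 ^ (k + 1)) powr (-a) * (r / 2 ^ k) powr n = r powr (n - a) * 2 powr a * (2 powr (a - n)) ^ k"
proof -
  have pow2: "(2::real) ^ (k + 1) = 2 powr (real k + 1)" "(2::real) ^ k = 2 powr real k"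
    by (simp_all add: powr_realpow[symmetric] add.commute del: power_Suc)
  have "(r / 2 ^ (k + 1)) powr (-a) * (r / 2 ^ k) powr n
      = (r powr (-a) * 2 powr ((k + 1) * a)) * (r powr n * 2 powr (- (k * n)))"
    unfolding pow2 using assms by (simp add: powr_divide powr_powr powr_minus divide_simps add.commute)
  also have "\<dots> = (r powr n * r powr (-a)) * (2 powr ((k + 1) * a) * 2 powr (- (k * n)))"
    by (simp only: ac_simps)
  also have "r powr n * r powr (-a) = r powr (n - a)"
    using assms by (simp add: powr_add[symmetric])
  also have "2 powr ((k + 1) * a) * 2 powr (- (k * n)) = (2::real) powr a * (2 powr (a - n)) ^ k"
    by (simp add: powr_realpow[symmetric] powr_powr powr_add[symmetric] algebra_simps)
  finally show ?thesis
    by (simp only: mult.assoc)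
qed

lemma nn_integral_norm_powr_ball_0:
  fixes a r :: real
  assumes a: "0 < a" "a < real DIM('a::euclidean_space)" and r: "0 < r"
  shows "(\<integral>\<^sup>+ y. ennreal (norm y powr (-a)) * indicator (ball (0::'a) r) y \<partial>lebesgue)
       \<le> ennreal (unit_ball_vol TYPE('a) * 2 powr a / (1 - 2 powr (a - DIM('a))) * r powr (DIM('a) - a))"
proof -
  let ?n = "real DIM('a)"
  let ?c = "unit_ball_vol TYPE('a) * (r powr (?n - a) * 2 powr a)"
  let ?q = "(2::real) powr (a - ?n)"
  have q: "0 < ?q" "?q < 1"
    using a powr_less_cancel_iff[of 2 "a - ?n" 0] by auto
  have c: "0 \<le> ?c"
    using unit_ball_vol_pos[where 'a='a] by simp
  have "(\<integral>\<^sup>+ y. ennreal (norm y powr (-a)) * indicator (ball (0::'a) r) y \<partial>lebesgue)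
     \<le> (\<integral>\<^sup>+ y. (\<Sum>k. ennreal ((r / 2 ^ (k + 1)) powr (-a)) * indicator (ball (0::'a) (r / 2 ^ k)) y) \<partial>lebesgue)"
    by (intro nn_integral_mono norm_powr_le_dyadic_sum a r)
  also have "\<dots> = (\<Sum>k. \<integral>\<^sup>+ y. ennreal ((r / 2 ^ (k + 1)) powr (-a)) * indicator (ball (0::'a) (r / 2 ^ k)) y \<partial>lebesgue)"
    by (intro nn_integral_suminf borel_measurable_times_ennreal borel_measurable_const
        borel_measurable_indicator) auto
  also have "\<dots> = (\<Sum>k. ennreal (?c * ?q ^ k))"
  proof (intro suminf_cong)
    fix k :: nat
    have "(r / 2 ^ k) ^ DIM('a) = (r / 2 ^ k) powr ?n"
      using r by (simp add: powr_realpow)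
    then have shell_term: "(r / 2 ^ (k + 1)) powr (-a) * (r / 2 ^ k) ^ DIM('a) * unit_ball_vol TYPE('a) = ?c * ?q ^ k"
      using dyadic_shell_term_eq[OF r, of k a ?n] by (simp only: ac_simps)
    have "(\<integral>\<^sup>+ y. ennreal ((r / 2 ^ (k + 1)) powr (-a)) * indicator (ball (0::'a) (r / 2 ^ k)) y \<partial>lebesgue)
       = ennreal ((r / 2 ^ (k + 1)) powr (-a) * (r / 2 ^ k) ^ DIM('a) * unit_ball_vol TYPE('a))"
      using r by (intro nn_integral_const_ball) auto
    then show "(\<integral>\<^sup>+ y. ennreal ((r / 2 ^ (k + 1)) powr (-a)) * indicator (ball (0::'a) (r / 2 ^ k)) y \<partial>lebesgue)
       = ennreal (?c * ?q ^ k)"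
      by (simp only: shell_term)
  qed
  also have "\<dots> = ennreal (\<Sum>k. ?c * ?q ^ k)"
    using q c by (intro suminf_ennreal2 summable_mult summable_geometric) auto
  also have "(\<Sum>k. ?c * ?q ^ k) = unit_ball_vol TYPE('a) * 2 powr a / (1 - ?q) * r powr (?n - a)"
    using q by (subst suminf_mult) (auto intro: summable_geometric simp: suminf_geometric)
  finally show ?thesis .
qed

lemma nn_integral_norm_powr_ball:
  fixes a :: real
  assumes a: "0 < a" "a < real DIM('a::euclidean_space)"
  obtains C where "\<And>(x::'a) r. 0 < r \<Longrightarrow>
    (\<integral>\<^sup>+ y. ennreal (norm y powr (-a)) * indicator (ball x r) y \<partial>lebesgue) \<le> ennreal (C * r powr (DIM('a) - a))"
proof
  let ?v = "unit_ball_vol TYPE('a)"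
  let ?C0 = "?v * 2 powr a / (1 - 2 powr (a - DIM('a)))"
  fix x :: 'a and r :: real
  assume r: "0 < r"
  have C0: "0 \<le> ?C0"
    using a powr_less_cancel_iff[of 2 "a - DIM('a)" 0] unit_ball_vol_pos[where 'a='a]
    by (intro divide_nonneg_pos) auto
  have "ennreal (norm y powr (-a)) * indicator (ball x r) y
     \<le> ennreal (norm y powr (-a)) * indicator (ball 0 r) y + ennreal (r powr (-a)) * indicator (ball x r) y"
    for y :: 'a
  proof (cases "y \<in> ball x r")
    case y: True
    show ?thesis
    proof (cases "norm y < r")
      case False
      then have "norm y powr (-a) \<le> r powr (-a)"
        using r a by (intro powr_mono2') auto
      then show ?thesis
        using y False by (simp add: ennreal_leI add_increasing)
    qed (use y in simp)
  qed simp
  then have "(\<integral>\<^sup>+ y. ennreal (norm y powr (-a)) * indicator (ball x r) y \<partial>lebesgue)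
     \<le> (\<integral>\<^sup>+ y. ennreal (norm y powr (-a)) * indicator (ball 0 r) y + ennreal (r powr (-a)) * indicator (ball x r) y \<partial>lebesgue)"
    by (rule nn_integral_mono)
  also have "\<dots> = (\<integral>\<^sup>+ y. ennreal (norm y powr (-a)) * indicator (ball (0::'a) r) y \<partial>lebesgue)
       + (\<integral>\<^sup>+ y. ennreal (r powr (-a)) * indicator (ball x r) y \<partial>lebesgue)"
    by (intro nn_integral_add measurable_completion) measurable
  also have "\<dots> \<le> ennreal (?C0 * r powr (DIM('a) - a)) + ennreal (r powr (-a) * r ^ DIM('a) * ?v)"
    using nn_integral_norm_powr_ball_0[OF a r] r by (intro add_mono) (simp_all add: nn_integral_const_ball)
  also have "r powr (-a) * r ^ DIM('a) * ?v = ?v * r powr (DIM('a) - a)"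
    using r by (simp add: powr_realpow[symmetric] powr_diff powr_minus divide_simps)
  also have "ennreal (?C0 * r powr (DIM('a) - a)) + ennreal (?v * r powr (DIM('a) - a))
      = ennreal (?C0 * r powr (DIM('a) - a) + ?v * r powr (DIM('a) - a))"
    using C0 unit_ball_vol_pos[where 'a='a] by (intro ennreal_plus[symmetric] mult_nonneg_nonneg) auto
  also have "?C0 * r powr (DIM('a) - a) + ?v * r powr (DIM('a) - a) = (?C0 + ?v) * r powr (DIM('a) - a)"
    by (simp add: distrib_right)
  finally show "(\<integral>\<^sup>+ y. ennreal (norm y powr (-a)) * indicator (ball x r) y \<partial>lebesgue)
      \<le> ennreal ((?C0 + ?v) * r powr (DIM('a) - a))" .
qed

section \<open>The power weight and its truncation\<close>

text \<open>At the origin the weight takes the value \<open>0 powr _ = 0\<close>, which is irrelevant on a null set.\<close>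
definition power_weight :: "real \<Rightarrow> real \<Rightarrow> 'a::euclidean_space \<Rightarrow> real" where
  "power_weight p lam y = norm y powr ((lam - DIM('a)) / p)"

lemma power_weight_powr:
  assumes "0 < p"
  shows "\<bar>power_weight p lam y\<bar> powr p = norm (y::'a::euclidean_space) powr (lam - DIM('a))"
  using assms by (cases "y = 0") (simp_all add: power_weight_def powr_powr)

lemma power_weight_measurable: "power_weight p lam \<in> borel_measurable lebesgue"
  unfolding power_weight_def by (rule measurable_completion) measurable

lemma ball_integral_power_weight:
  assumes "0 < p" "0 < lam" "lam < real DIM('a::euclidean_space)"
  obtains C where "\<And>(x::'a) r. 0 < r \<Longrightarrow> ball_integral p (power_weight p lam) x r \<le> ennreal (C * r powr lam)"
proof -
  have "0 < real DIM('a) - lam" "real DIM('a) - lam < real DIM('a)"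
    using assms by auto
  then obtain C where "\<And>(x::'a) r. 0 < r \<Longrightarrow>
      (\<integral>\<^sup>+ y. ennreal (norm y powr (-(DIM('a) - lam))) * indicator (ball x r) y \<partial>lebesgue)
      \<le> ennreal (C * r powr (DIM('a) - (DIM('a) - lam)))"
    using nn_integral_norm_powr_ball[where 'a='a] by metis
  then show ?thesis
    using that[of C] assms(1) by (simp add: power_weight_powr)
qed

lemma power_weight_in_morrey:
  assumes "0 < p" "0 < lam" "lam < real DIM('a::euclidean_space)"
  shows "(power_weight p lam :: 'a \<Rightarrow> real) \<in> morrey p lam"
  using ball_integral_power_weight[OF assms] morreyI_ball_integral_le[OF power_weight_measurable] by metis

lemma power_weight_notin_V0_morrey:
  assumes "0 < p" "lam \<le> real DIM('a::euclidean_space)"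
  shows "(power_weight p lam :: 'a \<Rightarrow> real) \<notin> V0_morrey p lam"
proof
  let ?c = "ennreal (3 powr (lam - DIM('a)) * unit_ball_vol TYPE('a))"
  assume "(power_weight p lam :: 'a \<Rightarrow> real) \<in> V0_morrey p lam"
  then have "((\<lambda>r. SUP x. morrey_M p lam (power_weight p lam) (x::'a) r) \<longlongrightarrow> 0) (at_right 0)"
    by (simp add: V0_morrey_def)
  moreover have "\<forall>\<^sub>F r in at_right 0. ?c \<le> (SUP x. morrey_M p lam (power_weight p lam) (x::'a) r)"
    using eventually_at_right_less[of "0::real"]
    by eventually_elim (intro SUP_morrey_M_ge_annulus assms(2), simp_all add: power_weight_powr assms(1))
  ultimately show False
    using not_tendsto_zero_if_eventually_ge[of "at_right (0::real)" ?c] unit_ball_vol_pos[where 'a='a]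
    by auto
qed

definition truncated_power_weight :: "real \<Rightarrow> real \<Rightarrow> 'a::euclidean_space \<Rightarrow> real" where
  "truncated_power_weight p lam y = (if 1 \<le> norm y then power_weight p lam y else 0)"

lemma truncated_power_weight_powr:
  assumes "0 < p"
  shows "\<bar>truncated_power_weight p lam y\<bar> powr p
       = (if 1 \<le> norm y then norm (y::'a::euclidean_space) powr (lam - DIM('a)) else 0)"
  using assms by (simp add: truncated_power_weight_def power_weight_powr)

lemma truncated_power_weight_in_V0_morrey:
  assumes "0 < p" "0 < lam" "lam < real DIM('a::euclidean_space)"
  shows "(truncated_power_weight p lam :: 'a \<Rightarrow> real) \<in> V0_morrey p lam"
proof -
  obtain C where C: "\<And>(x::'a) r. 0 < r \<Longrightarrow> ball_integral p (power_weight p lam) x r \<le> ennreal (C * r powr lam)"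
    using ball_integral_power_weight[OF assms] by metis
  have "ball_integral p (truncated_power_weight p lam) x r \<le> ball_integral p (power_weight p lam) x r"
    for x :: 'a and r
    by (intro nn_integral_mono mult_right_mono ennreal_leI) (auto simp: truncated_power_weight_def)
  then have "ball_integral p (truncated_power_weight p lam) x r \<le> ennreal (C * r powr lam)"
    if "0 < r" for x :: 'a and r
    using C[OF that] by (rule order_trans)
  moreover have "(truncated_power_weight p lam :: 'a \<Rightarrow> real) \<in> borel_measurable lebesgue"
    unfolding truncated_power_weight_def power_weight_def by (rule measurable_completion) measurable
  ultimately have "(truncated_power_weight p lam :: 'a \<Rightarrow> real) \<in> morrey p lam"
    by (intro morreyI_ball_integral_le)
  moreover have "\<bar>truncated_power_weight p lam y\<bar> powr p \<le> 1" for y :: 'a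
  proof (cases "1 \<le> norm y")
    case True
    then have "norm y powr (lam - DIM('a)) \<le> 1 powr (lam - DIM('a))"
      using assms(3) by (intro powr_mono2') auto
    then show ?thesis
      using True assms(1) by (simp add: truncated_power_weight_powr)
  qed (simp add: truncated_power_weight_def)
  ultimately show ?thesis
    using assms(3) by (rule V0_morreyI_bounded)
qed

lemma truncated_power_weight_notin_Vinf_morrey:
  assumes "0 < p" "lam \<le> real DIM('a::euclidean_space)"
  shows "(truncated_power_weight p lam :: 'a \<Rightarrow> real) \<notin> Vinf_morrey p lam"
proof
  let ?c = "ennreal (3 powr (lam - DIM('a)) * unit_ball_vol TYPE('a))"
  assume "(truncated_power_weight p lam :: 'a \<Rightarrow> real) \<in> Vinf_morrey p lam"
  then have "((\<lambda>r. SUP x. morrey_M p lam (truncated_power_weight p lam) (x::'a) r) \<longlongrightarrow> 0) at_top"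
    by (simp add: Vinf_morrey_def)
  moreover have "\<forall>\<^sub>F r in at_top. ?c \<le> (SUP x. morrey_M p lam (truncated_power_weight p lam) (x::'a) r)"
    using eventually_ge_at_top[of "1::real"]
    by eventually_elim
      (intro SUP_morrey_M_ge_annulus assms(2), simp_all add: truncated_power_weight_powr assms(1))
  ultimately show False
    using not_tendsto_zero_if_eventually_ge[of "at_top::real filter" ?c] unit_ball_vol_pos[where 'a='a]
    by auto
qed

section \<open>Unit balls at dyadic distances\<close>

definition dyadic_unit_balls :: "'a::real_normed_vector \<Rightarrow> 'a set" where
  "dyadic_unit_balls e = (\<Union>k::nat. ball (2 ^ k *\<^sub>R e) 1)"

lemma card_dyadic_centres_near:
  fixes e x :: "'a::real_normed_vector"
  assumes e: "norm e = 1" and R: "1 \<le> R"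
  defines "K \<equiv> {k::nat. dist x (2 ^ k *\<^sub>R e) < R}"
  shows "finite K" "real (card K) \<le> log 2 (4 * R) + 2"
proof -
  define c where "c k = (2::real) ^ k *\<^sub>R e" for k
  have dist_c: "dist (c k) (c j) = \<bar>2 ^ k - 2 ^ j\<bar>" for k j
    unfolding c_def dist_norm using e by (simp add: scaleR_diff_left[symmetric])
  define m where "m = nat \<lceil>log 2 (4 * R)\<rceil>"
  have log_ge: "2 \<le> log 2 (4 * R)"
    using R by (simp add: le_log_iff)
  have "log 2 (4 * R) \<le> real m"
    unfolding m_def by linarith
  then have "2 powr log 2 (4 * R) \<le> 2 powr real m"
    by simp
  then have four_R: "4 * R \<le> 2 ^ m"
    using R by (simp add: powr_realpow)
  have m_le: "real m \<le> log 2 (4 * R) + 1"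
    unfolding m_def using log_ge by linarith
  have "finite K \<and> card K \<le> m + 1"
  proof (cases "K = {}")
    case False
    define k0 where "k0 = (LEAST k. k \<in> K)"
    have k0: "k0 \<in> K"
      using False unfolding k0_def by (metis LeastI_ex all_not_in_conv)
    have "K \<subseteq> insert k0 {..<m}"
    proof
      fix k assume k: "k \<in> K"
      show "k \<in> insert k0 {..<m}"
      proof (cases "k = k0")
        case False
        have "k0 \<le> k"
          using k unfolding k0_def by (rule Least_le)
        then have lt: "k0 < k"
          using False by simp
        have "dist (c k) (c k0) \<le> dist x (c k) + dist x (c k0)"
          by (rule dist_triangle3)
        then have "(2::real) ^ k - 2 ^ k0 < 2 * R"
          using k k0 dist_c[of k k0] e unfolding K_def c_def by simp
        moreover have "(2::real) ^ k0 \<le> 2 ^ (k - 1)"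
          using lt by (intro power_increasing) auto
        moreover have "(2::real) ^ k = 2 * 2 ^ (k - 1)"
          using lt by (cases k) auto
        ultimately have "(2::real) ^ k < 2 ^ m"
          using four_R by linarith
        then show ?thesis
          by simp
      qed simp
    qed
    then show ?thesis
      using card_mono[of "insert k0 {..<m}" K] card_insert_le_m1[of "m + 1" "{..<m}" k0]
      by (auto intro: finite_subset)
  qed simp
  then show "finite K" "real (card K) \<le> log 2 (4 * R) + 2"
    using m_le by linarith+
qed

lemma indicator_powr: "(indicator S y :: real) powr p = indicator S y"
  by (simp add: indicator_def)

lemma ball_integral_dyadic_unit_balls:
  fixes e x :: "'a::euclidean_space"
  assumes e: "norm e = 1" and r: "0 < r"
  shows "ball_integral p (indicator (dyadic_unit_balls e)) x r
       \<le> ennreal ((log 2 (4 * r + 4) + 2) * unit_ball_vol TYPE('a))"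
proof -
  define K where "K = {k::nat. dist x (2 ^ k *\<^sub>R e) < r + 1}"
  have K: "finite K" "real (card K) \<le> log 2 (4 * (r + 1)) + 2"
    using card_dyadic_centres_near[OF e, of "r + 1" x] r unfolding K_def by auto
  have "ennreal (\<bar>indicator (dyadic_unit_balls e) y\<bar> powr p) * indicator (ball x r) y
      \<le> (\<Sum>k\<in>K. indicator (ball (2 ^ k *\<^sub>R e) 1) y)" for y
  proof (cases "y \<in> dyadic_unit_balls e \<and> y \<in> ball x r")
    case True
    then obtain k where k: "y \<in> ball (2 ^ k *\<^sub>R e) 1" "y \<in> ball x r"
      unfolding dyadic_unit_balls_def by auto
    then have "k \<in> K"
      using dist_triangle[of x "2 ^ k *\<^sub>R e" y] unfolding K_def by (simp add: dist_commute)
    then have "(indicator (ball (2 ^ k *\<^sub>R e) 1) y :: ennreal) \<le> (\<Sum>k\<in>K. indicator (ball (2 ^ k *\<^sub>R e) 1) y)"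
      using K(1) by (intro member_le_sum) auto
    then show ?thesis
      using True k by (simp add: indicator_powr)
  qed (auto simp: indicator_def)
  then have "ball_integral p (indicator (dyadic_unit_balls e)) x r
      \<le> (\<integral>\<^sup>+ y. (\<Sum>k\<in>K. indicator (ball (2 ^ k *\<^sub>R e) 1) y) \<partial>lebesgue)"
    by (rule nn_integral_mono)
  also have "\<dots> = (\<Sum>k\<in>K. \<integral>\<^sup>+ y. indicator (ball (2 ^ k *\<^sub>R e) 1) y \<partial>lebesgue)"
    by (intro nn_integral_sum measurable_completion) measurable
  also have "\<dots> = (\<Sum>k\<in>K. ennreal (unit_ball_vol TYPE('a)))"
    using nn_integral_const_ball[where 'a='a, of 1 1] by simp
  also have "\<dots> = ennreal (card K * unit_ball_vol TYPE('a))"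
    using unit_ball_vol_pos[where 'a='a] by (simp add: ennreal_of_nat_eq_real_of_nat ennreal_mult')
  also have "\<dots> \<le> ennreal ((log 2 (4 * r + 4) + 2) * unit_ball_vol TYPE('a))"
    using K(2) unit_ball_vol_pos[where 'a='a] by (intro ennreal_leI mult_right_mono) (simp_all add: algebra_simps)
  finally show ?thesis .
qed

lemma morrey_M_dyadic_unit_balls_le:
  fixes e x :: "'a::euclidean_space"
  assumes "norm e = 1" "0 < r"
  shows "morrey_M p lam (indicator (dyadic_unit_balls e)) x r
       \<le> ennreal (r powr (-lam) * ((log 2 (4 * r + 4) + 2) * unit_ball_vol TYPE('a)))"
  by (rule morrey_M_le[OF ball_integral_dyadic_unit_balls[OF assms]])

lemma indicator_dyadic_unit_balls_in_morrey:
  fixes e :: "'a::euclidean_space"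
  assumes e: "norm e = 1" and lam: "0 < lam" "lam \<le> real DIM('a)"
  shows "(indicator (dyadic_unit_balls e) :: 'a \<Rightarrow> real) \<in> morrey p lam"
proof -
  let ?f = "indicator (dyadic_unit_balls e) :: 'a \<Rightarrow> real"
  let ?v = "unit_ball_vol TYPE('a)"
  define \<phi> where "\<phi> r = r powr (-lam) * ((log 2 (4 * r + 4) + 2) * ?v)" for r
  have "(\<phi> \<longlongrightarrow> 0) at_top"
    unfolding \<phi>_def using lam(1) by real_asymp
  then obtain R where R: "\<And>r. R \<le> r \<Longrightarrow> \<phi> r < 1"
    using order_tendstoD(2)[of \<phi> 0 at_top 1] by (auto simp: eventually_at_top_linorder)
  define R' where "R' = max R 1"
  define K where "K = max 1 (?v * R' powr (DIM('a) - lam))"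
  have "morrey_M p lam ?f x r \<le> ennreal K" if r: "0 < r" for x r
  proof (cases "R' \<le> r")
    case True
    then have "\<phi> r \<le> K"
      using R[of r] by (simp add: R'_def K_def)
    then show ?thesis
      using morrey_M_dyadic_unit_balls_le[OF e r, of p lam x] order_trans ennreal_leI
      unfolding \<phi>_def by blast
  next
    case False
    have "?v * r powr (DIM('a) - lam) \<le> ?v * R' powr (DIM('a) - lam)"
      using False r lam unit_ball_vol_pos[where 'a='a] by (intro mult_left_mono powr_mono2) auto
    then have "1 * ?v * r powr (DIM('a) - lam) \<le> K"
      by (simp add: K_def)
    moreover have "\<bar>?f y\<bar> powr p \<le> 1" for y
      by (simp add: indicator_powr indicator_le_1)
    ultimately show ?thesis
      using morrey_M_le_bounded[of ?f p 1 r lam x] r order_trans ennreal_leI by blast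
  qed
  moreover have "ball_integral p ?f x r < \<infinity>" if "0 < r" for x r
    using ball_integral_dyadic_unit_balls[OF e that, of p x] by (simp add: le_less_trans)
  moreover have "?f \<in> borel_measurable lebesgue"
    unfolding dyadic_unit_balls_def by (rule measurable_completion) measurable
  ultimately show ?thesis
    by (intro morreyI)
qed

lemma indicator_dyadic_unit_balls_in_V0_morrey:
  fixes e :: "'a::euclidean_space"
  assumes "norm e = 1" "0 < lam" "lam < real DIM('a)"
  shows "(indicator (dyadic_unit_balls e) :: 'a \<Rightarrow> real) \<in> V0_morrey p lam"
  using assms by (intro V0_morreyI_bounded[where B=1] indicator_dyadic_unit_balls_in_morrey)
    (simp_all add: indicator_powr indicator_le_1)

lemma indicator_dyadic_unit_balls_in_Vinf_morrey:
  fixes e :: "'a::euclidean_space"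
  assumes e: "norm e = 1" and lam: "0 < lam" "lam \<le> real DIM('a)"
  shows "(indicator (dyadic_unit_balls e) :: 'a \<Rightarrow> real) \<in> Vinf_morrey p lam"
proof -
  have "((\<lambda>r. r powr (-lam) * ((log 2 (4 * r + 4) + 2) * unit_ball_vol TYPE('a))) \<longlongrightarrow> 0) at_top"
    using lam(1) by real_asymp
  then have "((\<lambda>r. SUP x. morrey_M p lam (indicator (dyadic_unit_balls e)) (x::'a) r) \<longlongrightarrow> 0) at_top"
    using morrey_M_dyadic_unit_balls_le[OF e]
    by (intro SUP_morrey_M_tendsto_zeroI eventually_gt_at_top)
  then show ?thesis
    using indicator_dyadic_unit_balls_in_morrey[OF assms] by (simp add: Vinf_morrey_def)
qed

lemma indicator_dyadic_unit_balls_notin_Vstar_morrey: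
  fixes e :: "'a::euclidean_space"
  assumes e: "norm e = 1"
  shows "(indicator (dyadic_unit_balls e) :: 'a \<Rightarrow> real) \<notin> Vstar_morrey p lam"
proof
  let ?f = "indicator (dyadic_unit_balls e) :: 'a \<Rightarrow> real"
  let ?tail = "\<lambda>N x. \<integral>\<^sup>+ y. ennreal (\<bar>?f y\<bar> powr p) * indicator (ball x 1) y
                              * indicator (UNIV - ball 0 N) y \<partial>lebesgue"
  assume "?f \<in> Vstar_morrey p lam"
  then have "((\<lambda>N::real. SUP x. ?tail N x) \<longlongrightarrow> 0) at_top"
    by (simp add: Vstar_morrey_def)
  moreover have "ennreal (unit_ball_vol TYPE('a)) \<le> (SUP x. ?tail N x)" for N :: real
  proof -
    obtain k :: nat where k: "\<bar>N\<bar> + 1 < 2 ^ k"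
      using real_arch_pow[of 2 "\<bar>N\<bar> + 1"] by auto
    define x where "x = (2::real) ^ k *\<^sub>R e"
    have norm_x: "norm x = 2 ^ k"
      using e by (simp add: x_def)
    have "indicator (ball x 1) y \<le> ennreal (\<bar>?f y\<bar> powr p) * indicator (ball x 1) y * indicator (UNIV - ball 0 N) y"
      for y
    proof (cases "y \<in> ball x 1")
      case True
      then have "y \<in> dyadic_unit_balls e"
        unfolding dyadic_unit_balls_def x_def by blast
      have "norm (x - y) < 1"
        using True by (simp add: dist_norm)
      then have "2 ^ k - 1 < norm y"
        using norm_x norm_triangle_ineq2[of x y] by linarith
      then have "y \<notin> ball 0 N"
        using k by (simp add: dist_norm)
      then show ?thesis
        using True \<open>y \<in> dyadic_unit_balls e\<close> by (simp add: indicator_powr)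
    qed simp
    then have "(\<integral>\<^sup>+ y. indicator (ball x 1) y \<partial>lebesgue) \<le> ?tail N x"
      by (rule nn_integral_mono)
    moreover have "(\<integral>\<^sup>+ y. indicator (ball x 1) y \<partial>lebesgue) = ennreal (unit_ball_vol TYPE('a))"
      using nn_integral_const_ball[of 1 1 x] by simp
    moreover have "?tail N x \<le> (SUP x. ?tail N x)"
      by (rule SUP_upper) simp
    ultimately show ?thesis
      by simp
  qed
  ultimately show False
    using not_tendsto_zero_if_eventually_ge[of "at_top::real filter" "ennreal (unit_ball_vol TYPE('a))"]
      unit_ball_vol_pos[where 'a='a] by auto
qed

theorem corollary4p2:
  fixes lam p :: real
  assumes "0 < lam" "lam < real DIM('a::euclidean_space)" "1 \<le> p"
  shows "(V0inf_star_morrey p lam :: ('a \<Rightarrow> real) set) \<subset> V0_morrey p lam \<inter> Vinf_morrey p lam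
       \<and> V0_morrey p lam \<inter> Vinf_morrey p lam \<subset> (V0_morrey p lam :: ('a \<Rightarrow> real) set)
       \<and> V0_morrey p lam \<subset> (morrey p lam :: ('a \<Rightarrow> real) set)"
proof -
  obtain e :: 'a where e: "norm e = 1"
    using nonempty_Basis norm_Basis by blast
  have p: "0 < p" and lam: "lam \<le> real DIM('a)"
    using assms by auto
  have "indicator (dyadic_unit_balls e) \<in> V0_morrey p lam \<inter> Vinf_morrey p lam - V0inf_star_morrey p lam"
    using indicator_dyadic_unit_balls_in_V0_morrey[OF e assms(1,2)]
      indicator_dyadic_unit_balls_in_Vinf_morrey[OF e assms(1) lam]
      indicator_dyadic_unit_balls_notin_Vstar_morrey[OF e]
    unfolding V0inf_star_morrey_def by blast
  moreover have "truncated_power_weight p lam \<in> V0_morrey p lam - (Vinf_morrey p lam :: ('a \<Rightarrow> real) set)"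
    using truncated_power_weight_in_V0_morrey[OF p assms(1,2)] truncated_power_weight_notin_Vinf_morrey[OF p lam]
    by blast
  moreover have "power_weight p lam \<in> morrey p lam - (V0_morrey p lam :: ('a \<Rightarrow> real) set)"
    using power_weight_in_morrey[OF p assms(1,2)] power_weight_notin_V0_morrey[OF p lam] by blast
  moreover have "V0inf_star_morrey p lam \<subseteq> V0_morrey p lam \<inter> (Vinf_morrey p lam :: ('a \<Rightarrow> real) set)"
    "V0_morrey p lam \<subseteq> (morrey p lam :: ('a \<Rightarrow> real) set)"
    by (auto simp: V0inf_star_morrey_def V0_morrey_def)
  ultimately show ?thesis
    by blast
qed

end
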